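(* Let $\Gamma_a(V)$ be the augmented Dynkin graph of $V$. (i) If $u,v$ are monomials such that $p_{ij}=p_{ji}=1$ for all $x_i\in\mu(u)$, $x_j\in\mu(v)$ with $i\neq j$, then $[u,v]^-=0$. (ii) Let $m\ge2$, $h_1,\dots,h_m\in\{x_1,\dots,x_n\}$ and $u=h_1\cdots h_m$. If either $|\mu(u)|=1$ or the subgraph of $\Gamma_a(V)$ induced on $\{i:x_i\in\mu(u)\}$ is disconnected, then $\sigma(h_1,\dots,h_m)=0$ for every full bracketing $\sigma$ of $h_1,\dots,h_m$ (in this order) by $[\,,\,]^-$.
   Context: $V$ is a braided vector space of diagonal type over an algebraically closed field of characteristic $0$ with basis $x_1,\dots,x_n$, braiding $C(x_i\otimes x_j)=q_{ij}x_j\otimes x_i$, Nichols algebra $\mathfrak{B}(V)$; $p_{ij}:=q_{ij}$. $[a,b]^-:=ab-ba$. The augmented Dynkin graph $\Gamma_a(V)$ has vertex set $\{1,\dots,n\}$ and an (undirected) edge $\{i,j\}$, $i\neq j$, iff $p_{ij}\neq1$ or $p_{ji}\neq1$. Monomials are words in $x_1,\dots,x_n$ viewed in $\mathfrak{B}(V)$; $\mu(u)$ is the set of letters of $u$. *)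

theory Defs
  imports "HOL-Combinatorics.Permutations" "HOL-Computational_Algebra.Polynomial"
begin

(* Letters x_1..x_n are encoded as natural numbers 0..<n; a word is a nat list.
   Elements of the tensor algebra T(V) are coefficient functions on words. *)
type_synonym 'k tens = "nat list \<Rightarrow> 'k"

definition mono :: "nat list \<Rightarrow> 'k::comm_ring_1 tens" where
  "mono u = (\<lambda>w. if w = u then 1 else 0)"

definition tmul :: "'k::comm_ring_1 tens \<Rightarrow> 'k tens \<Rightarrow> 'k tens" where
  "tmul f g = (\<lambda>w. \<Sum>k\<le>length w. f (take k w) * g (drop k w))"

definition comm_minus :: "'k::comm_ring_1 tens \<Rightarrow> 'k tens \<Rightarrow> 'k tens" where
  "comm_minus f g = (\<lambda>w. tmul f g w - tmul g f w)"

(* scalar of the Matsumoto lift of sigma acting on the word w for the diagonal braiding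
   c(x_i \<otimes> x_j) = q_ij x_j \<otimes> x_i : product of q_{w_a w_b} over inversions a<b, sigma a > sigma b *)
definition braid_char :: "(nat \<Rightarrow> nat \<Rightarrow> 'k::comm_ring_1) \<Rightarrow> nat list \<Rightarrow> (nat \<Rightarrow> nat) \<Rightarrow> 'k" where
  "braid_char q w \<sigma> = (\<Prod>p\<in>{(a,b). a < b \<and> b < length w \<and> \<sigma> b < \<sigma> a}. q (w ! fst p) (w ! snd p))"

(* quantum symmetrizer Omega_n = sum over S_n of Matsumoto lifts, applied degreewise;
   M(sigma) sends w to braid_char q w sigma * w', where w' ! (sigma a) = w ! a. *)
definition symmetrizer :: "(nat \<Rightarrow> nat \<Rightarrow> 'k::comm_ring_1) \<Rightarrow> 'k tens \<Rightarrow> 'k tens" where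
  "symmetrizer q f = (\<lambda>v. \<Sum>\<sigma>\<in>{\<sigma>. \<sigma> permutes {..<length v}}.
      (let w = map (\<lambda>a. v ! (\<sigma> a)) [0..<length v] in braid_char q w \<sigma> * f w))"

(* f represents 0 in the Nichols algebra B(V) = T(V) / (\<oplus>_n ker Omega_n) *)
definition nichols_zero :: "(nat \<Rightarrow> nat \<Rightarrow> 'k::comm_ring_1) \<Rightarrow> 'k tens \<Rightarrow> bool" where
  "nichols_zero q f \<longleftrightarrow> (\<forall>v. symmetrizer q f v = 0)"

datatype bracketing = BLeaf nat | BNode bracketing bracketing

fun bleaves :: "bracketing \<Rightarrow> nat list" where
  "bleaves (BLeaf i) = [i]"
| "bleaves (BNode a b) = bleaves a @ bleaves b"

fun beval :: "bracketing \<Rightarrow> 'k::comm_ring_1 tens" where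
  "beval (BLeaf i) = mono [i]"
| "beval (BNode a b) = comm_minus (beval a) (beval b)"

definition dynkin_edge :: "(nat \<Rightarrow> nat \<Rightarrow> 'k::one) \<Rightarrow> nat \<Rightarrow> nat \<Rightarrow> bool" where
  "dynkin_edge q i j \<longleftrightarrow> i \<noteq> j \<and> (q i j \<noteq> 1 \<or> q j i \<noteq> 1)"

definition induced_connected :: "(nat \<Rightarrow> nat \<Rightarrow> 'k::one) \<Rightarrow> nat set \<Rightarrow> bool" where
  "induced_connected q S \<longleftrightarrow>
     (\<forall>i\<in>S. \<forall>j\<in>S. (i, j) \<in> {(a, b). a \<in> S \<and> b \<in> S \<and> dynkin_edge q a b}\<^sup>*)"

end

theory Submission
  imports Defs
begin

text \<open>
  Call two words commutation equivalent if one arises from the other by repeatedly swapping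
  adjacent letters \<open>a, b\<close> with \<open>q a b = q b a = 1\<close>. Such a swap does not change the quantum
  symmetrizer: composing with the adjacent transposition permutes the summands, and the
  Matsumoto scalar only loses or gains the inversion of the swapped pair, whose factor is 1.
  Hence the span of differences of commutation-equivalent words, which is a two-sided ideal,
  vanishes in the Nichols algebra. A commutator of two elements written in mutually trivially
  braided letters lies in this ideal, which gives (i). For (ii), a disconnected induced subgraph
  splits the letters into two such classes; in a bracketing using both, some inner bracket
  either uses both classes (and the ideal absorbs the outer brackets) or is exactly a commutator
  of the two classes. If only one letter occurs, every bracket vanishes outright.
\<close>

lemma tmul_add_left: "tmul (\<lambda>x. f x + g x) h = (\<lambda>x. tmul f h x + tmul g h x)"
  by (auto simp: tmul_def sum.distrib algebra_simps)

lemma tmul_add_right: "tmul f (\<lambda>x. g x + h x) = (\<lambda>x. tmul f g x + tmul f h x)"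
  by (auto simp: tmul_def sum.distrib algebra_simps)

lemma tmul_scale_left: "tmul (\<lambda>x. c * f x) g = (\<lambda>x. c * tmul f g x)"
  by (auto simp: tmul_def sum_distrib_left algebra_simps)

lemma tmul_scale_right: "tmul f (\<lambda>x. c * g x) = (\<lambda>x. c * tmul f g x)"
  by (auto simp: tmul_def sum_distrib_left algebra_simps)

lemma tmul_diff_left: "tmul (\<lambda>x. f x - g x) h = (\<lambda>x. tmul f h x - tmul g h x)"
  by (auto simp: tmul_def sum_subtractf algebra_simps)

lemma tmul_diff_right: "tmul f (\<lambda>x. g x - h x) = (\<lambda>x. tmul f g x - tmul f h x)"
  by (auto simp: tmul_def sum_subtractf algebra_simps)

lemma tmul_zero_left: "tmul (\<lambda>_. 0) f = (\<lambda>_. 0)"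
  by (simp add: tmul_def)

lemma tmul_zero_right: "tmul f (\<lambda>_. 0) = (\<lambda>_. 0)"
  by (simp add: tmul_def)

lemma tmul_mono_mono: "tmul (mono u) (mono v) = (mono (u @ v) :: 'k::comm_ring_1 tens)"
proof
  fix w
  have "mono u (take k w) * mono v (drop k w)
      = (if k = length u then if w = u @ v then 1 else 0 else (0::'k))" if "k \<le> length w" for k
  proof -
    have split_iff: "take k w = u \<and> drop k w = v \<longleftrightarrow> k = length u \<and> w = u @ v"
      using that by (metis append_eq_conv_conj append_take_drop_id length_take min_absorb2)
    have "mono u (take k w) * mono v (drop k w) = (if take k w = u \<and> drop k w = v then 1 else (0::'k))"
      by (simp add: mono_def)
    also have "\<dots> = (if k = length u \<and> w = u @ v then 1 else 0)"
      by (simp only: split_iff)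
    finally show ?thesis
      by simp
  qed
  then have "tmul (mono u) (mono v) w
      = (\<Sum>k\<le>length w. if k = length u then if w = u @ v then 1 else 0 else (0::'k))"
    unfolding tmul_def by (intro sum.cong) simp_all
  also have "\<dots> = mono (u @ v) w"
    by (simp add: mono_def)
  finally show "tmul (mono u) (mono v) w = (mono (u @ v) w :: 'k)" .
qed

lemma comm_minus_zero_left: "comm_minus (\<lambda>_. 0) f = (\<lambda>_. 0)"
  by (simp add: comm_minus_def tmul_zero_left tmul_zero_right)

lemma comm_minus_zero_right: "comm_minus f (\<lambda>_. 0) = (\<lambda>_. 0)"
  by (simp add: comm_minus_def tmul_zero_left tmul_zero_right)

lemma comm_minus_self: "comm_minus f f = (\<lambda>_. 0)"
  by (simp add: comm_minus_def)

section \<open>Commutation equivalence of words\<close>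

definition trivially_braided :: "(nat \<Rightarrow> nat \<Rightarrow> 'k::one) \<Rightarrow> nat \<Rightarrow> nat \<Rightarrow> bool" where
  "trivially_braided q a b \<longleftrightarrow> q a b = 1 \<and> q b a = 1"

definition commuting_sets :: "(nat \<Rightarrow> nat \<Rightarrow> 'k::one) \<Rightarrow> nat set \<Rightarrow> nat set \<Rightarrow> bool" where
  "commuting_sets q A B \<longleftrightarrow> (\<forall>a\<in>A. \<forall>b\<in>B. a = b \<or> trivially_braided q a b)"

lemma commuting_sets_sym: "commuting_sets q A B \<Longrightarrow> commuting_sets q B A"
  by (auto simp: commuting_sets_def trivially_braided_def)

inductive adjacent_commute :: "(nat \<Rightarrow> nat \<Rightarrow> 'k::one) \<Rightarrow> nat list \<Rightarrow> nat list \<Rightarrow> bool"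
  for q where
  "trivially_braided q a b \<Longrightarrow> adjacent_commute q (xs @ a # b # ys) (xs @ b # a # ys)"

lemma adjacent_commute_append:
  assumes "adjacent_commute q w w'"
  shows "adjacent_commute q (us @ w @ vs) (us @ w' @ vs)"
  using assms
proof cases
  case (1 a b xs ys)
  then show ?thesis
    using adjacent_commute.intros[of q a b "us @ xs" "ys @ vs"] by simp
qed

lemma adjacent_commute_rtranclp_append:
  "(adjacent_commute q)\<^sup>*\<^sup>* w w' \<Longrightarrow> (adjacent_commute q)\<^sup>*\<^sup>* (us @ w @ vs) (us @ w' @ vs)"
  by (induction rule: rtranclp_induct) (auto intro: rtranclp.rtrancl_into_rtrancl adjacent_commute_append)

lemma adjacent_commute_rtranclp_swap:
  assumes "commuting_sets q (set u) (set v)"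
  shows "(adjacent_commute q)\<^sup>*\<^sup>* (u @ v) (v @ u)"
  using assms
proof (induction u)
  case (Cons c u)
  have "(adjacent_commute q)\<^sup>*\<^sup>* (c # v) (v @ [c])"
    using Cons.prems
  proof (induction v)
    case (Cons d v)
    have "(adjacent_commute q)\<^sup>*\<^sup>* (c # d # v) (d # c # v)"
      using Cons.prems adjacent_commute.intros[of q c d "[]" v]
      by (auto simp: commuting_sets_def)
    moreover have "(adjacent_commute q)\<^sup>*\<^sup>* ([d] @ (c # v) @ []) ([d] @ (v @ [c]) @ [])"
      using Cons by (intro adjacent_commute_rtranclp_append) (simp add: commuting_sets_def)
    ultimately show ?case
      by (simp add: rtranclp_trans)
  qed simp
  then have "(adjacent_commute q)\<^sup>*\<^sup>* ([] @ (c # v) @ u) ([] @ (v @ [c]) @ u)"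
    by (rule adjacent_commute_rtranclp_append)
  moreover have "(adjacent_commute q)\<^sup>*\<^sup>* ([c] @ (u @ v) @ []) ([c] @ (v @ u) @ [])"
    using Cons by (intro adjacent_commute_rtranclp_append) (simp add: commuting_sets_def)
  ultimately show ?case
    by (simp add: rtranclp_trans)
qed simp

section \<open>Invariance of the quantum symmetrizer\<close>

lemma symmetrizer_eq_sum_permute_list:
  "symmetrizer q f v =
     (\<Sum>\<sigma> | \<sigma> permutes {..<length v}. braid_char q (permute_list \<sigma> v) \<sigma> * f (permute_list \<sigma> v))"
  by (simp add: symmetrizer_def permute_list_def Let_def)

lemma braid_char_square:
  "braid_char q w \<sigma> =
     (\<Prod>(a, b)\<in>{..<length w} \<times> {..<length w}. if a < b \<and> \<sigma> b < \<sigma> a then q (w ! a) (w ! b) else 1)"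
proof -
  have "{(a, b). a < b \<and> b < length w \<and> \<sigma> b < \<sigma> a} =
        {p \<in> {..<length w} \<times> {..<length w}. fst p < snd p \<and> \<sigma> (snd p) < \<sigma> (fst p)}"
    by auto
  then show ?thesis
    by (simp add: braid_char_def prod.inter_filter case_prod_beta)
qed

lemma permute_list_adjacent_transpose:
  "permute_list (transpose (length xs) (Suc (length xs))) (xs @ a # b # ys) = xs @ b # a # ys"
    (is "permute_list ?\<tau> ?w = _")
proof (rule nth_equalityI)
  fix k assume "k < length (permute_list ?\<tau> ?w)"
  then have nth: "permute_list ?\<tau> ?w ! k = ?w ! ?\<tau> k"
    by (simp add: permute_list_nth permutes_swap_id)
  consider "k < length xs" | "k = length xs" | "k = Suc (length xs)"
    | j where "k = Suc (Suc (length xs)) + j"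
    by (metis less_Suc_eq less_add_Suc1 linorder_neqE_nat not_less_eq less_imp_Suc_add add_Suc)
  then have "?w ! ?\<tau> k = (xs @ b # a # ys) ! k"
    by cases (simp_all add: nth_append)
  with nth show "permute_list ?\<tau> ?w ! k = (xs @ b # a # ys) ! k"
    by simp
qed simp

lemma braid_char_adjacent_transpose:
  fixes q :: "nat \<Rightarrow> nat \<Rightarrow> 'k::comm_ring_1"
  assumes i: "Suc i < length w"
    and trivial: "q (w ! i) (w ! Suc i) = 1" "q (w ! Suc i) (w ! i) = 1"
  shows "braid_char q (permute_list (transpose i (Suc i)) w) (\<sigma> \<circ> transpose i (Suc i))
    = braid_char q w \<sigma>"
proof -
  let ?\<tau> = "transpose i (Suc i)"
  let ?S = "{..<length w} \<times> {..<length w}"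
  define H where "H a b = (if ?\<tau> a < ?\<tau> b \<and> \<sigma> b < \<sigma> a then q (w ! a) (w ! b) else 1)" for a b
  have \<tau>_lt: "a < length w \<Longrightarrow> ?\<tau> a < length w" for a
    using i by (auto simp: transpose_def)
  have nth: "a < length w \<Longrightarrow> permute_list ?\<tau> w ! a = w ! ?\<tau> a" for a
    using i by (simp add: permute_list_nth permutes_swap_id)
  have "braid_char q (permute_list ?\<tau> w) (\<sigma> \<circ> ?\<tau>) = (\<Prod>(a, b)\<in>?S. H (?\<tau> a) (?\<tau> b))"
    unfolding braid_char_square by (rule prod.cong) (auto simp: H_def nth)
  also have "\<dots> = (\<Prod>(a, b)\<in>?S. H a b)"
    by (rule prod.reindex_bij_witness[where i = "\<lambda>(a, b). (?\<tau> a, ?\<tau> b)" and j = "\<lambda>(a, b). (?\<tau> a, ?\<tau> b)"])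
       (auto simp: \<tau>_lt)
  also have "\<dots> = braid_char q w \<sigma>"
    unfolding braid_char_square
  proof (rule prod.cong[OF refl], clarify)
    fix a b
    show "H a b = (if a < b \<and> \<sigma> b < \<sigma> a then q (w ! a) (w ! b) else 1)"
    proof (cases "{a, b} = {i, Suc i}")
      case True
      then show ?thesis using trivial by (auto simp: H_def doubleton_eq_iff)
    next
      case False
      then have "?\<tau> a < ?\<tau> b \<longleftrightarrow> a < b"
        by (auto simp: transpose_def)
      then show ?thesis by (simp add: H_def)
    qed
  qed
  finally show ?thesis .
qed

lemma symmetrizer_mono_adjacent_swap:
  fixes q :: "nat \<Rightarrow> nat \<Rightarrow> 'k::comm_ring_1"
  assumes "trivially_braided q a b"
  shows "symmetrizer q (mono (xs @ a # b # ys)) v = symmetrizer q (mono (xs @ b # a # ys)) v"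
proof (cases "length v = length (xs @ a # b # ys)")
  case False
  then have "permute_list \<sigma> v \<noteq> xs @ c # d # ys" for \<sigma> c d
    by (metis length_permute_list length_append length_Cons)
  then show ?thesis
    by (simp add: symmetrizer_eq_sum_permute_list mono_def)
next
  case True
  define x where "x = xs @ a # b # ys"
  define \<tau> where "\<tau> = transpose (length xs) (Suc (length xs))"
  let ?P = "{\<sigma>. \<sigma> permutes {..<length v}}"
  let ?W = "\<lambda>\<sigma>. permute_list \<sigma> v"
  have \<tau>: "\<tau> permutes {..<length v}"
    using True unfolding \<tau>_def by (intro permutes_swap_id) auto
  have x': "permute_list \<tau> x = xs @ b # a # ys"
    unfolding x_def \<tau>_def by (rule permute_list_adjacent_transpose)
  have \<tau>_involutive: "permute_list \<tau> (permute_list \<tau> y) = y" if "length y = length v" for y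
  proof -
    have "permute_list \<tau> (permute_list \<tau> y) = permute_list (\<tau> \<circ> \<tau>) y"
      using that \<tau> by (simp add: permute_list_compose)
    then show ?thesis
      by (simp add: \<tau>_def)
  qed
  have term_eq: "braid_char q (?W (\<sigma> \<circ> \<tau>)) (\<sigma> \<circ> \<tau>) * mono (permute_list \<tau> x) (?W (\<sigma> \<circ> \<tau>))
      = braid_char q (?W \<sigma>) \<sigma> * mono x (?W \<sigma>)" for \<sigma>
  proof -
    have W: "?W (\<sigma> \<circ> \<tau>) = permute_list \<tau> (?W \<sigma>)"
      using \<tau> by (simp add: permute_list_compose)
    have "permute_list \<tau> (?W \<sigma>) = permute_list \<tau> x \<longleftrightarrow> ?W \<sigma> = x"
    proof
      assume "permute_list \<tau> (?W \<sigma>) = permute_list \<tau> x"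
      then have "permute_list \<tau> (permute_list \<tau> (?W \<sigma>)) = permute_list \<tau> (permute_list \<tau> x)"
        by (rule arg_cong)
      then show "?W \<sigma> = x"
        using True by (simp add: \<tau>_involutive x_def)
    qed simp
    moreover have "braid_char q (permute_list \<tau> x) (\<sigma> \<circ> \<tau>) = braid_char q x \<sigma>"
    proof -
      have "q (x ! length xs) (x ! Suc (length xs)) = 1" "q (x ! Suc (length xs)) (x ! length xs) = 1"
        using assms by (simp_all add: x_def nth_append trivially_braided_def)
      moreover have "Suc (length xs) < length x"
        by (simp add: x_def)
      ultimately show ?thesis
        unfolding \<tau>_def by (intro braid_char_adjacent_transpose)
    qed
    ultimately show ?thesis
      unfolding W by (auto simp: mono_def)
  qed
  have "symmetrizer q (mono (xs @ b # a # ys)) v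
      = (\<Sum>\<sigma>\<in>?P. braid_char q (?W (\<sigma> \<circ> \<tau>)) (\<sigma> \<circ> \<tau>) * mono (permute_list \<tau> x) (?W (\<sigma> \<circ> \<tau>)))"
    unfolding symmetrizer_eq_sum_permute_list x' [symmetric]
    by (rule sum_permutations_compose_right[OF \<tau>])
  also have "\<dots> = symmetrizer q (mono x) v"
    unfolding symmetrizer_eq_sum_permute_list term_eq ..
  finally show ?thesis
    unfolding x_def by (rule sym)
qed

lemma symmetrizer_mono_adjacent_commute:
  fixes q :: "nat \<Rightarrow> nat \<Rightarrow> 'k::comm_ring_1"
  assumes "(adjacent_commute q)\<^sup>*\<^sup>* w w'"
  shows "symmetrizer q (mono w) v = symmetrizer q (mono w') v"
  using assms
proof (induction rule: rtranclp_induct)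
  case (step w' w'')
  from step.hyps(2) show ?case
    by cases (metis step.IH symmetrizer_mono_adjacent_swap)
qed simp

lemma symmetrizer_add_scale_diff:
  "symmetrizer q (\<lambda>x. f x + c * (g x - h x)) v
     = symmetrizer q f v + c * (symmetrizer q g v - symmetrizer q h v)"
  by (simp add: symmetrizer_def Let_def sum.distrib sum_distrib_left sum_subtractf algebra_simps)

section \<open>The commutation ideal\<close>

text \<open>This span of differences is a two-sided ideal because commutation equivalence is a
  congruence for concatenation.\<close>

inductive commutation_ideal :: "(nat \<Rightarrow> nat \<Rightarrow> 'k::comm_ring_1) \<Rightarrow> 'k tens \<Rightarrow> bool"
  for q where
  zero: "commutation_ideal q (\<lambda>_. 0)"
| add_diff: "commutation_ideal q f \<Longrightarrow> (adjacent_commute q)\<^sup>*\<^sup>* w w' \<Longrightarrow>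
    commutation_ideal q (\<lambda>x. f x + c * (mono w x - mono w' x))"

lemma nichols_zero_if_commutation_ideal:
  "commutation_ideal q f \<Longrightarrow> nichols_zero q f"
proof (induction rule: commutation_ideal.induct)
  case zero
  then show ?case
    by (simp add: nichols_zero_def symmetrizer_def)
next
  case (add_diff f w w' c)
  then show ?case
    by (simp add: nichols_zero_def symmetrizer_add_scale_diff symmetrizer_mono_adjacent_commute)
qed

lemma commutation_ideal_add:
  assumes "commutation_ideal q f" "commutation_ideal q g"
  shows "commutation_ideal q (\<lambda>x. f x + g x)"
  using assms(2)
proof (induction rule: commutation_ideal.induct)
  case (add_diff g w w' c)
  then have "commutation_ideal q (\<lambda>x. (f x + g x) + c * (mono w x - mono w' x))"
    by (intro commutation_ideal.add_diff)
  then show ?case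
    by (simp add: add.assoc)
qed (simp add: assms(1))

lemma commutation_ideal_scale:
  assumes "commutation_ideal q f"
  shows "commutation_ideal q (\<lambda>x. c * f x)"
  using assms
proof (induction rule: commutation_ideal.induct)
  case (add_diff f w w' d)
  then have "commutation_ideal q (\<lambda>x. c * f x + (c * d) * (mono w x - mono w' x))"
    by (intro commutation_ideal.add_diff)
  then show ?case
    by (simp add: algebra_simps)
qed (simp add: commutation_ideal.zero)

lemma commutation_ideal_diff:
  "commutation_ideal q f \<Longrightarrow> commutation_ideal q g \<Longrightarrow> commutation_ideal q (\<lambda>x. f x - g x)"
  using commutation_ideal_add[of q f "\<lambda>x. (-1) * g x"] commutation_ideal_scale[of q g "-1"]
  by simp

lemma commutation_ideal_tmul_mono_left:
  assumes "commutation_ideal q f"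
  shows "commutation_ideal q (tmul (mono u) f)"
  using assms
proof (induction rule: commutation_ideal.induct)
  case (add_diff f w w' c)
  then have "commutation_ideal q (\<lambda>x. tmul (mono u) f x + c * (mono (u @ w) x - mono (u @ w') x))"
    using adjacent_commute_rtranclp_append[of q w w' u "[]"]
    by (intro commutation_ideal.add_diff) auto
  then show ?case
    by (simp add: tmul_add_right tmul_scale_right tmul_diff_right tmul_mono_mono)
qed (simp add: tmul_zero_right commutation_ideal.zero)

lemma commutation_ideal_tmul_mono_right:
  assumes "commutation_ideal q f"
  shows "commutation_ideal q (tmul f (mono u))"
  using assms
proof (induction rule: commutation_ideal.induct)
  case (add_diff f w w' c)
  then have "commutation_ideal q (\<lambda>x. tmul f (mono u) x + c * (mono (w @ u) x - mono (w' @ u) x))"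
    using adjacent_commute_rtranclp_append[of q w w' "[]" u]
    by (intro commutation_ideal.add_diff) auto
  then show ?case
    by (simp add: tmul_add_left tmul_scale_left tmul_diff_left tmul_mono_mono)
qed (simp add: tmul_zero_left commutation_ideal.zero)

inductive word_span :: "nat set \<Rightarrow> 'k::comm_ring_1 tens \<Rightarrow> bool"
  for A where
  zero: "word_span A (\<lambda>_. 0)"
| add_mono: "word_span A f \<Longrightarrow> set w \<subseteq> A \<Longrightarrow> word_span A (\<lambda>x. f x + c * mono w x)"

lemma word_span_add:
  assumes "word_span A f" "word_span A g"
  shows "word_span A (\<lambda>x. f x + g x)"
  using assms(2)
proof (induction rule: word_span.induct)
  case (add_mono g w c)
  then have "word_span A (\<lambda>x. (f x + g x) + c * mono w x)"
    by (intro word_span.add_mono)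
  then show ?case
    by (simp add: add.assoc)
qed (simp add: assms(1))

lemma word_span_scale:
  assumes "word_span A f"
  shows "word_span A (\<lambda>x. c * f x)"
  using assms
proof (induction rule: word_span.induct)
  case (add_mono f w d)
  then have "word_span A (\<lambda>x. c * f x + (c * d) * mono w x)"
    by (intro word_span.add_mono)
  then show ?case
    by (simp add: algebra_simps)
qed (simp add: word_span.zero)

lemma word_span_monoI:
  "set w \<subseteq> A \<Longrightarrow> word_span A (mono w)"
  using word_span.add_mono[OF word_span.zero, of w A 1] by simp

lemma word_span_tmul_mono_left:
  assumes "word_span B g" "set u \<subseteq> A"
  shows "word_span (A \<union> B) (tmul (mono u) g)"
  using assms(1)
proof (induction rule: word_span.induct)
  case (add_mono g w c)
  then have "word_span (A \<union> B) (\<lambda>x. tmul (mono u) g x + c * mono (u @ w) x)"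
    using assms(2) by (intro word_span.add_mono) auto
  then show ?case
    by (simp add: tmul_add_right tmul_scale_right tmul_mono_mono)
qed (simp add: tmul_zero_right word_span.zero)

lemma word_span_tmul:
  assumes "word_span A f" "word_span B g"
  shows "word_span (A \<union> B) (tmul f g)"
  using assms(1)
  by induction
    (simp_all add: tmul_zero_left tmul_add_left tmul_scale_left word_span.zero
      word_span_add word_span_scale word_span_tmul_mono_left assms(2))

lemma word_span_comm_minus:
  assumes "word_span A f" "word_span B g"
  shows "word_span (A \<union> B) (comm_minus f g)"
proof -
  have "word_span (A \<union> B) (\<lambda>x. tmul f g x + (-1) * tmul g f x)"
    using word_span_tmul[OF assms] word_span_tmul[OF assms(2,1)]
    by (intro word_span_add word_span_scale) (simp_all add: Un_commute)
  then show ?thesis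
    by (simp add: comm_minus_def)
qed

lemma word_span_beval: "word_span (set (bleaves t)) (beval t)"
  by (induction t) (auto intro: word_span_monoI dest: word_span_comm_minus)

lemma commutation_ideal_tmul_left:
  assumes "word_span A g" "commutation_ideal q f"
  shows "commutation_ideal q (tmul g f)"
  using assms(1)
  by induction
    (simp_all add: tmul_zero_left tmul_add_left tmul_scale_left commutation_ideal.zero
      commutation_ideal_add commutation_ideal_scale commutation_ideal_tmul_mono_left assms(2))

lemma commutation_ideal_tmul_right:
  assumes "word_span A g" "commutation_ideal q f"
  shows "commutation_ideal q (tmul f g)"
  using assms(1)
  by induction
    (simp_all add: tmul_zero_right tmul_add_right tmul_scale_right commutation_ideal.zero
      commutation_ideal_add commutation_ideal_scale commutation_ideal_tmul_mono_right assms(2))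

lemma commutation_ideal_comm_minus_left:
  "commutation_ideal q f \<Longrightarrow> word_span A g \<Longrightarrow> commutation_ideal q (comm_minus f g)"
  unfolding comm_minus_def
  by (intro commutation_ideal_diff commutation_ideal_tmul_left commutation_ideal_tmul_right)

lemma commutation_ideal_comm_minus_right:
  "commutation_ideal q f \<Longrightarrow> word_span A g \<Longrightarrow> commutation_ideal q (comm_minus g f)"
  unfolding comm_minus_def
  by (intro commutation_ideal_diff commutation_ideal_tmul_left commutation_ideal_tmul_right)

lemma commutation_ideal_comm_minus_mono:
  assumes "word_span B g" "commuting_sets q A B" "set u \<subseteq> A"
  shows "commutation_ideal q (comm_minus (mono u) g)"
  using assms(1)
proof (induction rule: word_span.induct)
  case (add_mono g v c)
  have "(adjacent_commute q)\<^sup>*\<^sup>* (u @ v) (v @ u)"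
    using assms(2,3) add_mono.hyps(2)
    by (intro adjacent_commute_rtranclp_swap) (auto simp: commuting_sets_def)
  with add_mono.IH have "commutation_ideal q
      (\<lambda>x. comm_minus (mono u) g x + c * (mono (u @ v) x - mono (v @ u) x))"
    by (rule commutation_ideal.add_diff)
  then show ?case
    by (simp add: comm_minus_def tmul_add_left tmul_add_right tmul_scale_left tmul_scale_right
        tmul_mono_mono algebra_simps)
qed (simp add: comm_minus_zero_right commutation_ideal.zero)

lemma commutation_ideal_comm_minus_commuting:
  assumes "word_span A f" "word_span B g" "commuting_sets q A B"
  shows "commutation_ideal q (comm_minus f g)"
  using assms(1)
proof (induction rule: word_span.induct)
  case (add_mono f u c)
  then have "commutation_ideal q (\<lambda>x. comm_minus f g x + c * comm_minus (mono u) g x)"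
    using assms(2,3)
    by (intro commutation_ideal_add commutation_ideal_scale commutation_ideal_comm_minus_mono)
  then show ?case
    by (simp add: comm_minus_def tmul_add_left tmul_add_right tmul_scale_left tmul_scale_right
        algebra_simps)
qed (simp add: comm_minus_zero_left commutation_ideal.zero)

lemma beval_single_letter:
  "set (bleaves t) \<subseteq> {c} \<Longrightarrow> (beval t :: 'k::comm_ring_1 tens) \<in> {\<lambda>_. 0, mono [c]}"
proof (induction t)
  case (BNode a b)
  then have "(beval a :: 'k tens) \<in> {\<lambda>_. 0, mono [c]}" "(beval b :: 'k tens) \<in> {\<lambda>_. 0, mono [c]}"
    by simp_all
  then show ?case
    by (auto simp: comm_minus_zero_left comm_minus_zero_right comm_minus_self)
qed simp

lemma beval_BNode_single_letter:
  assumes "set (bleaves (BNode a b)) \<subseteq> {c}"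
  shows "(beval (BNode a b) :: 'k::comm_ring_1 tens) = (\<lambda>_. 0)"
proof -
  have "(beval a :: 'k tens) \<in> {\<lambda>_. 0, mono [c]}" "(beval b :: 'k tens) \<in> {\<lambda>_. 0, mono [c]}"
    using assms by (intro beval_single_letter; simp)+
  then show ?thesis
    by (auto simp: comm_minus_zero_left comm_minus_zero_right comm_minus_self)
qed

lemma bleaves_nonempty: "bleaves t \<noteq> []"
  by (induction t) simp_all

lemma commutation_ideal_beval_split:
  assumes commuting: "commuting_sets q A B" and disjoint: "A \<inter> B = {}"
  shows "set (bleaves t) \<subseteq> A \<union> B \<Longrightarrow> set (bleaves t) \<inter> A \<noteq> {} \<Longrightarrow> set (bleaves t) \<inter> B \<noteq> {}
    \<Longrightarrow> commutation_ideal q (beval t)"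
proof (induction t)
  case (BNode a b)
  let ?La = "set (bleaves a)" and ?Lb = "set (bleaves b)"
  have sides: "?La \<subseteq> A \<union> B" "?Lb \<subseteq> A \<union> B" "(?La \<union> ?Lb) \<inter> A \<noteq> {}" "(?La \<union> ?Lb) \<inter> B \<noteq> {}"
    using BNode.prems by auto
  show ?case
  proof (cases "?La \<inter> A \<noteq> {} \<and> ?La \<inter> B \<noteq> {}")
    case True
    with BNode.IH(1) sides(1) show ?thesis
      by (auto intro: commutation_ideal_comm_minus_left word_span_beval)
  next
    case a_one_side: False
    show ?thesis
    proof (cases "?Lb \<inter> A \<noteq> {} \<and> ?Lb \<inter> B \<noteq> {}")
      case True
      with BNode.IH(2) sides(2) show ?thesis
        by (auto intro: commutation_ideal_comm_minus_right word_span_beval)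
    next
      case b_one_side: False
      have "?La \<noteq> {}" "?Lb \<noteq> {}"
        by (simp_all add: bleaves_nonempty)
      with sides a_one_side b_one_side disjoint
      have "?La \<subseteq> A \<and> ?Lb \<subseteq> B \<or> ?La \<subseteq> B \<and> ?Lb \<subseteq> A"
        by blast
      then have "commuting_sets q ?La ?Lb"
        using commuting commuting_sets_sym[OF commuting] unfolding commuting_sets_def by blast
      then show ?thesis
        by (auto intro: commutation_ideal_comm_minus_commuting word_span_beval)
    qed
  qed
qed (use disjoint in auto)

lemma not_induced_connected_split:
  assumes "\<not> induced_connected q S"
  obtains A B where "commuting_sets q A B" "A \<inter> B = {}" "S \<subseteq> A \<union> B" "S \<inter> A \<noteq> {}" "S \<inter> B \<noteq> {}"
proof -
  define R where "R = {(a, b). a \<in> S \<and> b \<in> S \<and> dynkin_edge q a b}"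
  obtain i j where ij: "i \<in> S" "j \<in> S" "(i, j) \<notin> R\<^sup>*"
    using assms unfolding induced_connected_def R_def by blast
  define A where "A = {k \<in> S. (i, k) \<in> R\<^sup>*}"
  have "commuting_sets q A (S - A)"
    unfolding commuting_sets_def
  proof (intro ballI)
    fix c d assume c: "c \<in> A" and d: "d \<in> S - A"
    then have "(c, d) \<notin> R"
      unfolding A_def by (blast intro: rtrancl_into_rtrancl)
    with c d show "c = d \<or> trivially_braided q c d"
      unfolding R_def A_def dynkin_edge_def trivially_braided_def by auto
  qed
  then show ?thesis
    by (rule that) (use ij in \<open>auto simp: A_def\<close>)
qed

lemma nichols_zero_beval_degenerate:
  fixes q :: "nat \<Rightarrow> nat \<Rightarrow> 'k::comm_ring_1"
  assumes "2 \<le> length (bleaves t)"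
    and "card (set (bleaves t)) = 1 \<or> \<not> induced_connected q (set (bleaves t))"
  shows "nichols_zero q (beval t :: 'k tens)"
proof (cases "card (set (bleaves t)) = 1")
  case True
  then obtain c where "set (bleaves t) = {c}"
    by (rule card_1_singletonE)
  moreover obtain a b where "t = BNode a b"
    using assms(1) by (cases t) auto
  ultimately have "(beval t :: 'k tens) = (\<lambda>_. 0)"
    using beval_BNode_single_letter by blast
  then show ?thesis
    using nichols_zero_if_commutation_ideal[OF commutation_ideal.zero] by simp
next
  case False
  with assms(2) have "\<not> induced_connected q (set (bleaves t))"
    by simp
  then obtain A B where "commuting_sets q A B" "A \<inter> B = {}" "set (bleaves t) \<subseteq> A \<union> B"
      "set (bleaves t) \<inter> A \<noteq> {}" "set (bleaves t) \<inter> B \<noteq> {}"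
    by (rule not_induced_connected_split)
  then show ?thesis
    by (intro nichols_zero_if_commutation_ideal commutation_ideal_beval_split)
qed

theorem proposition6p5:
  fixes q :: "nat \<Rightarrow> nat \<Rightarrow> 'k::field_char_0" and n :: nat
  assumes alg_closed: "\<And>p :: 'k poly. degree p \<ge> 1 \<Longrightarrow> \<exists>x. poly p x = 0"
    and q_nz: "\<And>i j. i < n \<Longrightarrow> j < n \<Longrightarrow> q i j \<noteq> 0"
  shows "(\<forall>u v. set u \<subseteq> {..<n} \<longrightarrow> set v \<subseteq> {..<n} \<longrightarrow>
            (\<forall>i\<in>set u. \<forall>j\<in>set v. i \<noteq> j \<longrightarrow> q i j = 1 \<and> q j i = 1) \<longrightarrow>
            nichols_zero q (comm_minus (mono u) (mono v)))
       \<and> (\<forall>hs t. length hs \<ge> 2 \<longrightarrow> set hs \<subseteq> {..<n} \<longrightarrow> bleaves t = hs \<longrightarrow>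
            (card (set hs) = 1 \<or> \<not> induced_connected q (set hs)) \<longrightarrow>
            nichols_zero q (beval t))"
proof (intro conjI allI impI)
  fix u v :: "nat list"
  assume "\<forall>i\<in>set u. \<forall>j\<in>set v. i \<noteq> j \<longrightarrow> q i j = 1 \<and> q j i = 1"
  then have "commuting_sets q (set u) (set v)"
    by (auto simp: commuting_sets_def trivially_braided_def)
  then show "nichols_zero q (comm_minus (mono u) (mono v))"
    by (intro nichols_zero_if_commutation_ideal commutation_ideal_comm_minus_commuting word_span_monoI)
      simp_all
next
  fix hs t
  assume "2 \<le> length hs" "bleaves t = hs" "card (set hs) = 1 \<or> \<not> induced_connected q (set hs)"
  then show "nichols_zero q (beval t)"
    by (intro nichols_zero_beval_degenerate) simp_all
qed

end
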